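(* In the setting below, for every $a\in A$ the map $f_a:X\to T_a$ is roughly Lipschitz: there are constants $\Lambda>0$, $\sigma\ge0$ such that $|f_a(x)f_a(x')|\le\Lambda|xx'|+\sigma$ for all $x,x'\in X$.
   Context: Setting: $Z$ is a bounded metric space with $\operatorname{diam}Z>0$, $\mu=\pi/\operatorname{diam}Z$, $A$ a set with $|A|=n+1$, and $\delta,\gamma\in(0,1)$, $\lambda\ge1$, $r\in(0,1)$ sufficiently small with $\lambda r<\delta$, $r<\operatorname{diam}Z$. $(\mathcal U_j)_{j\in\mathbb N}$ is a $\gamma$-separated characteristic sequence of open coverings of $Z$, each colored by $A$, $\mathcal U_j=\bigcup_{a\in A}\mathcal U_j^a$, with parameter $r$ and characteristic constants $\delta,\lambda$; that is: each $\mathcal U_j^a$ consists of pairwise disjoint open sets; (1) $\sup_{U\in\mathcal U_j}\operatorname{diam}U\le r^j$ and every ball of radius $\delta r^j$ in $Z$ is contained in some member of $\mathcal U_j$; (2) for every $a,j$ and $z\in Z$ there is $U\in\mathcal U_j^a$ with $\operatorname{dist}(z,U)\le\lambda r^j$; (3) for every $a$ and distinct $U\in\mathcal U_j^a$, $U'\in\mathcal U_{j'}^a$ with $j'\le j$, either $B_s(U)\cap U'=\emptyset$ or $B_s(U)\subset U'$, and if $j'<j$ there is $U''\in\mathcal U_j^a$ with $B_s(U'')\subset U'$, where $s=\gamma r^j$ and $B_s(U)=\{z:\operatorname{dist}(z,U)<s\}$. Trees: put $\mathcal U_0^a=\{Z\}$. $T_a$ is the tree (edges of length $1$, path metric) with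 vertex set $V^a=\bigsqcup_{j\ge0}V_j^a$, where $V_j^a$ is in bijection with $\mathcal U_j^a$ (root $v_a$ corresponds to $Z$); $v\in V_j^a$, $v'\in V_{j'}^a$, $j'<j$, are joined by an edge iff the corresponding sets satisfy $U\subset U'$ and $j'$ is the maximal level $<j$ for which some member of $\mathcal U_{j'}^a$ contains $U$. Cone: $\operatorname{Co}(Z)=Z\times[0,\infty)/Z\times\{0\}$ with vertex $o$ and metric $|xx'|$ for $x=(z,t),x'=(z',t')$ equal to the length of the side $\bar x\bar x'$ of a triangle in $\mathrm H^2$ with sides $t,t'$ from $\bar o$ enclosing angle $\mu|zz'|$. Let $R=\ln(1/r)$, $Z_j=\{(z,jR):z\in Z\}$ for $j\ge1$, $Z_0=\{o\}$, $X=\bigcup_{j\ge0}Z_j$. Define $f_a:X\to T_a$ by $f_a(o)=v_a$ and, for $x=(z,jR)$, $j\ge1$, $f_a(x)$ is the vertex of $V_j^a$ corresponding to a (fixed choice of) member $U\in\mathcal U_j^a$ closest to $z$, i.e. minimizing $\operatorname{dist}(z,U)$. *)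

theory Defs
  imports "HOL-Analysis.Analysis"
begin

definition nbhd :: "'z::metric_space set \<Rightarrow> real \<Rightarrow> 'z set \<Rightarrow> 'z set" where
  "nbhd Z s U = {z \<in> Z. infdist z U < s}"

text \<open>Levels are j = 1, 2, ...;
  Cov j a is the family of members of colour a at level j.\<close>
definition char_seq ::
  "'z::metric_space set \<Rightarrow> 'c set \<Rightarrow> (nat \<Rightarrow> 'c \<Rightarrow> 'z set set) \<Rightarrow> real \<Rightarrow> real \<Rightarrow> real \<Rightarrow> real \<Rightarrow> bool" where
  "char_seq Z A Cov r \<delta> lam \<gamma> \<longleftrightarrow>
     (\<forall>j\<ge>1. \<forall>a\<in>A.
        (\<forall>U\<in>Cov j a. openin (top_of_set Z) U \<and> U \<noteq> {}) \<and> pairwise disjnt (Cov j a)) \<and>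
     (\<forall>j\<ge>1. \<Union>(\<Union>a\<in>A. Cov j a) = Z) \<and>
     (\<forall>j\<ge>1. (\<forall>a\<in>A. \<forall>U\<in>Cov j a. diameter U \<le> r ^ j) \<and>
        (\<forall>z\<in>Z. \<exists>a\<in>A. \<exists>U\<in>Cov j a. ball z (\<delta> * r ^ j) \<inter> Z \<subseteq> U)) \<and>
     (\<forall>a\<in>A. \<forall>j\<ge>1. \<forall>z\<in>Z. \<exists>U\<in>Cov j a. infdist z U \<le> lam * r ^ j) \<and>
     (\<forall>a\<in>A. \<forall>j j'. 1 \<le> j' \<and> j' \<le> j \<longrightarrow>
        (\<forall>U\<in>Cov j a. \<forall>U'\<in>Cov j' a. (j' < j \<or> U \<noteq> U') \<longrightarrow>
            nbhd Z (\<gamma> * r ^ j) U \<inter> U' = {} \<or> nbhd Z (\<gamma> * r ^ j) U \<subseteq> U') \<and>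
        (j' < j \<longrightarrow> (\<forall>U'\<in>Cov j' a. \<exists>U''\<in>Cov j a. nbhd Z (\<gamma> * r ^ j) U'' \<subseteq> U')))"

definition CovE :: "'z set \<Rightarrow> (nat \<Rightarrow> 'c \<Rightarrow> 'z set set) \<Rightarrow> nat \<Rightarrow> 'c \<Rightarrow> 'z set set" where
  "CovE Z Cov j a = (if j = 0 then {Z} else Cov j a)"

definition tree_V :: "'z set \<Rightarrow> (nat \<Rightarrow> 'c \<Rightarrow> 'z set set) \<Rightarrow> 'c \<Rightarrow> (nat \<times> 'z set) set" where
  "tree_V Z Cov a = {(j, U). U \<in> CovE Z Cov j a}"

definition down_edge :: "'z set \<Rightarrow> (nat \<Rightarrow> 'c \<Rightarrow> 'z set set) \<Rightarrow> 'c \<Rightarrow> nat \<times> 'z set \<Rightarrow> nat \<times> 'z set \<Rightarrow> bool" where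
  "down_edge Z Cov a v v' \<longleftrightarrow>
     v \<in> tree_V Z Cov a \<and> v' \<in> tree_V Z Cov a \<and>
     fst v' < fst v \<and> snd v \<subseteq> snd v' \<and>
     (\<forall>k. fst v' < k \<and> k < fst v \<longrightarrow> \<not> (\<exists>W\<in>CovE Z Cov k a. snd v \<subseteq> W))"

definition tree_edge :: "'z set \<Rightarrow> (nat \<Rightarrow> 'c \<Rightarrow> 'z set set) \<Rightarrow> 'c \<Rightarrow> nat \<times> 'z set \<Rightarrow> nat \<times> 'z set \<Rightarrow> bool" where
  "tree_edge Z Cov a v w \<longleftrightarrow> down_edge Z Cov a v w \<or> down_edge Z Cov a w v"

definition graph_dist :: "('v \<Rightarrow> 'v \<Rightarrow> bool) \<Rightarrow> 'v \<Rightarrow> 'v \<Rightarrow> real" where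
  "graph_dist E v w = real (LEAST n. \<exists>p. length p = Suc n \<and> hd p = v \<and> last p = w \<and>
       (\<forall>i<n. E (p ! i) (p ! Suc i)))"

text \<open>Metric of the hyperbolic cone Co(Z): the side opposite to the angle \<mu>|zz'| in a
  triangle of H^2 with sides t, t' (hyperbolic law of cosines).  For t = 0 the value
  does not depend on z, so this is well defined on the quotient by Z \<times> {0}.\<close>
definition cone_dist :: "real \<Rightarrow> 'z::metric_space \<times> real \<Rightarrow> 'z \<times> real \<Rightarrow> real" where
  "cone_dist \<mu> x x' = arcosh (cosh (snd x) * cosh (snd x') -
       sinh (snd x) * sinh (snd x') * cos (\<mu> * dist (fst x) (fst x')))"

text \<open>The map f_a on X: level 0 is the cone vertex o, mapped to the root (0, Z);
  the point (z, jR), j \<ge> 1, is mapped to the vertex (j, F a j z), F being the fixed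
  choice of a closest member.\<close>
definition f_map :: "'z set \<Rightarrow> ('c \<Rightarrow> nat \<Rightarrow> 'z \<Rightarrow> 'z set) \<Rightarrow> 'c \<Rightarrow> nat \<Rightarrow> 'z \<Rightarrow> nat \<times> 'z set" where
  "f_map Z F a j z = (if j = 0 then (0, Z) else (j, F a j z))"

end

theory Submission
  imports Defs
begin

text \<open>
  Write R = ln (1 / r) and let x = (z, j R), x' = (z', j' R). The images of x and x' are
  members U, U' of levels j, j' containing points within 2 lam r^j and 2 lam r^j' of z and z'.
  Let k be the last level up to min j j' at which \<gamma> r^k still exceeds
  (4 lam + 1) max (|zz'|, r^(min j j')). Climbing the tree from U and U' to their deepest covers
  of level at most k takes at most j - k and j' - k edges, and the separation property (3)
  forces these two covers to be equal or adjacent, so the tree distance is at most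
  j + j' - 2 k + 1. In the other direction the hyperbolic law of cosines gives
  |xx'| \<ge> |j - j'| R - ln 2 and, once the angle \<mu> |zz'| is not negligible,
  |xx'| \<ge> (j + j') R + 2 ln (\<mu> |zz'|) - ln 288. By maximality of k one of these bounds yields
  (j + j' - 2 k + 1) R \<le> |xx'| + O(1 + R), so \<Lambda> = 1 / R works.
\<close>

lemma exists_last_level:
  fixes P :: "nat \<Rightarrow> bool"
  assumes "P 0"
  shows "\<exists>k\<le>J. P k \<and> (k = J \<or> \<not> P (Suc k))"
proof (induction J)
  case (Suc J)
  then show ?case by (cases "P (Suc J)") (auto intro: le_SucI)
qed (use assms in simp)

lemma infdist_less_imp_dist_less:
  assumes "infdist x A < e" "A \<noteq> {}"
  obtains a where "a \<in> A" "dist x a < e"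
  using assms by (auto simp: infdist_notempty cINF_less_iff bdd_below_image_dist)

lemma subset_nbhd: "U \<subseteq> Z \<Longrightarrow> 0 < s \<Longrightarrow> U \<subseteq> nbhd Z s U"
  by (auto simp: nbhd_def)

lemma graph_dist_le_relpowp:
  assumes "(E ^^ n) v w"
  shows "graph_dist E v w \<le> real n"
proof -
  obtain f where f: "f 0 = v" "f n = w" "\<forall>i<n. E (f i) (f (Suc i))"
    using assms by (auto simp: relpowp_fun_conv)
  let ?p = "map f [0..<Suc n]"
  have "length ?p = Suc n \<and> hd ?p = v \<and> last ?p = w \<and> (\<forall>i<n. E (?p ! i) (?p ! Suc i))"
    using f by (simp add: hd_map last_map nth_append del: upt_Suc)
  then have "(LEAST m. \<exists>p. length p = Suc m \<and> hd p = v \<and> last p = w \<and>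
      (\<forall>i<m. E (p ! i) (p ! Suc i))) \<le> n"
    by (intro Least_le) blast
  then show ?thesis unfolding graph_dist_def by simp
qed

lemma relpowp_symmetric:
  assumes "\<And>x y. E x y \<Longrightarrow> E y x" and "(E ^^ n) v w"
  shows "(E ^^ n) w v"
  using assms(2)
proof (induction n arbitrary: w)
  case (Suc n)
  then obtain u where "(E ^^ n) v u" "E u w" by (auto elim: relpowp_Suc_E)
  then show ?case using Suc.IH assms(1) by (metis relpowp_Suc_I2)
qed simp

lemma one_minus_cos_ge_square:
  fixes \<theta> :: real
  assumes "0 \<le> \<theta>" "\<theta> \<le> pi"
  shows "\<theta>\<^sup>2 / 18 \<le> 1 - cos \<theta>"
proof -
  define y where "y = \<theta> / 2"
  have y0: "0 \<le> y" and y2: "y \<le> 2" using assms pi_less_4 by (auto simp: y_def)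
  have "\<bar>sin y - (\<Sum>m<3. sin_coeff m * y ^ m)\<bar> \<le> inverse (fact 3) * \<bar>y\<bar> ^ 3"
    by (rule Maclaurin_sin_bound)
  then have "\<bar>sin y - y\<bar> \<le> y ^ 3 / 6"
    using y0 by (simp add: eval_nat_numeral sin_coeff_def)
  moreover have "y ^ 3 \<le> 4 * y"
  proof -
    have "y * y \<le> 4" using y0 y2 mult_mono[of y 2 y 2] by simp
    then show ?thesis using mult_right_mono y0 by (fastforce simp: power3_eq_cube)
  qed
  ultimately have "y / 3 \<le> sin y" by linarith
  then have "(y / 3)\<^sup>2 \<le> (sin y)\<^sup>2" using y0 by (intro power_mono) auto
  moreover have "cos \<theta> = 1 - 2 * (sin y)\<^sup>2" using cos_double_sin[of y] by (simp add: y_def)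
  ultimately show ?thesis by (simp add: y_def power2_eq_square)
qed

lemma ln_le_arcosh:
  fixes x :: real
  assumes "1 \<le> x"
  shows "ln x \<le> arcosh x"
proof -
  have "ln x \<le> ln (x + sqrt (x\<^sup>2 - 1))" using assms by (intro ln_mono) auto
  then show ?thesis using assms by (simp add: arcosh_real_def)
qed

lemma exp_abs_le_cosh: "exp \<bar>x :: real\<bar> / 2 \<le> cosh x"
  by (cases "x \<ge> 0") (auto simp: cosh_def)

lemma exp_le_four_sinh:
  fixes t :: real
  assumes "ln 2 \<le> t"
  shows "exp t / 4 \<le> sinh t"
proof -
  have "2 \<le> exp t" using assms by (metis exp_ln exp_le_cancel_iff zero_less_numeral)
  moreover have "1 \<le> exp t" using \<open>2 \<le> exp t\<close> by linarith
  ultimately have "exp (- t) \<le> exp t / 2"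
    using mult_mono[of 1 "exp t" 2 "exp t"] by (simp add: exp_minus field_simps)
  then show ?thesis by (simp add: sinh_def)
qed

lemma cosh_diff_le_cone_cosh:
  fixes t t' \<theta> :: real
  assumes "0 \<le> t" "0 \<le> t'"
  shows "cosh (t - t') \<le> cosh t * cosh t' - sinh t * sinh t' * cos \<theta>"
proof -
  have "sinh t * sinh t' * cos \<theta> \<le> sinh t * sinh t'"
    using assms by (intro mult_left_le) auto
  then show ?thesis by (simp add: cosh_diff)
qed

lemma cone_dist_ge_abs_diff:
  assumes "0 \<le> t" "0 \<le> t'"
  shows "\<bar>t - t'\<bar> - ln 2 \<le> cone_dist \<mu> (z, t) (z', t')"
proof -
  let ?X = "cosh t * cosh t' - sinh t * sinh t' * cos (\<mu> * dist z z')"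
  have X: "exp \<bar>t - t'\<bar> / 2 \<le> ?X" "1 \<le> ?X"
    using cosh_diff_le_cone_cosh[OF assms, of "\<mu> * dist z z'"] exp_abs_le_cosh[of "t - t'"] cosh_real_ge_1[of "t - t'"]
    by linarith+
  have "\<bar>t - t'\<bar> - ln 2 = ln (exp \<bar>t - t'\<bar> / 2)" by (simp add: ln_div)
  also have "\<dots> \<le> ln ?X" using X by (intro ln_mono) auto
  also have "\<dots> \<le> arcosh ?X" by (rule ln_le_arcosh[OF X(2)])
  finally show ?thesis by (simp add: cone_dist_def)
qed

lemma cone_dist_ge_sum:
  assumes "ln 2 \<le> t" "ln 2 \<le> t'" "0 < \<mu> * dist z z'" "\<mu> * dist z z' \<le> pi"
  shows "t + t' + 2 * ln (\<mu> * dist z z') - ln 288 \<le> cone_dist \<mu> (z, t) (z', t')"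
proof -
  let ?\<theta> = "\<mu> * dist z z'"
  let ?X = "cosh t * cosh t' - sinh t * sinh t' * cos ?\<theta>"
  have t0: "0 \<le> t" "0 \<le> t'" using assms ln_ge_zero[of 2] by linarith+
  have X1: "1 \<le> ?X"
    using cosh_diff_le_cone_cosh[OF t0, of ?\<theta>] cosh_real_ge_1[of "t - t'"] by linarith
  have "sinh t * sinh t' \<le> cosh t * cosh t'"
    using t0 by (intro mult_mono sinh_le_cosh_real) auto
  then have "sinh t * sinh t' * (1 - cos ?\<theta>) \<le> ?X" by (simp add: algebra_simps)
  moreover have "(exp t / 4) * (exp t' / 4) * (?\<theta>\<^sup>2 / 18) \<le> sinh t * sinh t' * (1 - cos ?\<theta>)"
    using exp_le_four_sinh assms t0 one_minus_cos_ge_square[of ?\<theta>]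
    by (intro mult_mono) auto
  ultimately have X: "exp (t + t') * ?\<theta>\<^sup>2 / 288 \<le> ?X" by (simp add: exp_add)
  have ln_eq: "ln (exp s * x\<^sup>2 / 288) = s + 2 * ln x - ln 288" if "0 < x" for s x :: real
    using that by (simp add: ln_div ln_mult ln_realpow)
  have "t + t' + 2 * ln ?\<theta> - ln 288 = ln (exp (t + t') * ?\<theta>\<^sup>2 / 288)"
    by (rule ln_eq[OF assms(3), symmetric])
  also have "\<dots> \<le> ln ?X"
    using assms(3) by (intro ln_mono[OF X] divide_pos_pos mult_pos_pos) auto
  also have "\<dots> \<le> arcosh ?X" using X1 by (rule ln_le_arcosh)
  finally show ?thesis by (simp add: cone_dist_def)
qed

lemma levels_le_cone_dist:
  fixes r \<gamma> M D :: real and j j' k :: nat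
  defines "R \<equiv> ln (1 / r)" and "J \<equiv> min j j'"
  assumes r: "0 < r" "r \<le> 1 / 2" and \<gamma>: "0 < \<gamma>" "\<gamma> \<le> M" and D: "0 < D" "dist z z' \<le> D"
    and "k \<le> J" and last: "k = J \<or> \<gamma> * r ^ Suc k \<le> M * max (dist z z') (r ^ J)"
  shows "(real j + real j' - 2 * real k + 1) * R
    \<le> cone_dist (pi / D) (z, real j * R) (z', real j' * R)
      + (ln 2 + ln 288 + 2 * \<bar>ln pi\<bar> + 2 * \<bar>ln D\<bar> + 2 * ln (M / \<gamma>) + 3 * R)"
    (is "?levels \<le> ?c + _")
proof -
  have "ln 2 \<le> R" unfolding R_def using r by (intro ln_mono) (auto simp: field_simps)
  then have R: "0 < R" using ln_gt_zero[of 2] by linarith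
  have ln_M\<gamma>: "0 \<le> ln (M / \<gamma>)" using \<gamma> by simp
  have ln_power: "ln (r ^ m) = - (real m * R)" for m
    using r by (simp add: R_def ln_realpow ln_div)
  have ln_level: "- (real m * R) \<le> ln (M / \<gamma>) + ln x" if "\<gamma> * r ^ m \<le> M * x" "0 < x" for m x
  proof -
    have "ln (\<gamma> * r ^ m) \<le> ln (M * x)" using that r \<gamma> by (intro ln_mono) auto
    then show ?thesis using r \<gamma> that ln_power[of m] by (simp add: ln_mult ln_div)
  qed
  have near: "\<bar>real j - real j'\<bar> * R - ln 2 \<le> ?c"
    using cone_dist_ge_abs_diff[of "real j * R" "real j' * R"] R
    by (simp add: abs_mult left_diff_distrib[symmetric])
  have abs_levels: "real j + real j' - 2 * real J = \<bar>real j - real j'\<bar>" by (auto simp: J_def)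
  have "0 \<le> ln (288::real)" "0 \<le> ln (2::real)" by simp_all
  consider "k = J" | "k < J" "dist z z' \<le> r ^ J" "\<gamma> * r ^ Suc k \<le> M * r ^ J"
    | "k < J" "r ^ J < dist z z'" "\<gamma> * r ^ Suc k \<le> M * dist z z'"
    using last \<open>k \<le> J\<close> by force
  then show ?thesis
  proof cases
    case 1
    then have "?levels = \<bar>real j - real j'\<bar> * R + R" using abs_levels by (simp add: algebra_simps)
    then show ?thesis
      using near ln_M\<gamma> R \<open>0 \<le> ln 288\<close> abs_ge_zero[of "ln pi"] abs_ge_zero[of "ln D"] by linarith
  next
    case 2
    then have "(real J - real k - 1) * R \<le> ln (M / \<gamma>)"
      using ln_level[of "Suc k" "r ^ J"] ln_power[of J] r by (simp add: algebra_simps)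
    moreover have "?levels = \<bar>real j - real j'\<bar> * R + 2 * ((real J - real k - 1) * R) + 3 * R"
      using abs_levels by (simp add: algebra_simps)
    ultimately show ?thesis
      using near R \<open>0 \<le> ln 288\<close> abs_ge_zero[of "ln pi"] abs_ge_zero[of "ln D"] by linarith
  next
    case 3
    let ?\<theta> = "pi / D * dist z z'"
    have d: "0 < dist z z'" using 3 zero_less_power[OF r(1), of J] by linarith
    have "1 \<le> real j" "1 \<le> real j'" using 3 by (auto simp: J_def)
    then have "ln 2 \<le> real j * R" "ln 2 \<le> real j' * R"
      using \<open>ln 2 \<le> R\<close> R by (simp_all add: mult_le_cancel_right1 order_trans)
    moreover have "0 < ?\<theta>" "?\<theta> \<le> pi" using d D by (auto simp: field_simps)
    ultimately have far: "real j * R + real j' * R + 2 * ln ?\<theta> - ln 288 \<le> ?c"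
      by (rule cone_dist_ge_sum)
    have "ln ?\<theta> = ln pi - ln D + ln (dist z z')"
      using D(1) d by (simp add: ln_mult_pos ln_divide_pos)
    moreover have "- (real (Suc k) * R) \<le> ln (M / \<gamma>) + ln (dist z z')"
      using ln_level 3 d by blast
    moreover have "?levels = real j * R + real j' * R - 2 * (real (Suc k) * R) + 3 * R"
      by (simp add: algebra_simps)
    ultimately show ?thesis
      using far \<open>0 \<le> ln 2\<close> abs_ge_self[of "ln D"] abs_ge_minus_self[of "ln pi"] by linarith
  qed
qed

locale char_seq_colour =
  fixes Z :: "'z::metric_space set" and A :: "'c set" and Cov :: "nat \<Rightarrow> 'c \<Rightarrow> 'z set set"
    and r \<delta> lam \<gamma> :: real and a :: 'c
  assumes char_seq: "char_seq Z A Cov r \<delta> lam \<gamma>" and colour: "a \<in> A"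
    and r_pos: "0 < r" and r_less_1: "r < 1" and \<gamma>_pos: "0 < \<gamma>" and Z_nonempty: "Z \<noteq> {}"
begin

abbreviation "C j \<equiv> CovE Z Cov j a"
abbreviation "E \<equiv> tree_edge Z Cov a"

lemma Cov_nonempty: "1 \<le> j \<Longrightarrow> U \<in> Cov j a \<Longrightarrow> U \<noteq> {}"
  using conjunct1[OF char_seq[unfolded char_seq_def]] colour by blast

lemma Cov_disjoint: "1 \<le> j \<Longrightarrow> pairwise disjnt (Cov j a)"
  using conjunct1[OF char_seq[unfolded char_seq_def]] colour by blast

lemma Cov_subset: "1 \<le> j \<Longrightarrow> U \<in> Cov j a \<Longrightarrow> U \<subseteq> Z"
  using conjunct1[OF conjunct2[OF char_seq[unfolded char_seq_def]]] colour by blast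

lemma Cov_near: "1 \<le> j \<Longrightarrow> z \<in> Z \<Longrightarrow> \<exists>U\<in>Cov j a. infdist z U \<le> lam * r ^ j"
  using conjunct1[OF conjunct2[OF conjunct2[OF conjunct2[OF char_seq[unfolded char_seq_def]]]]] colour
  by blast

lemma C_subset: "U \<in> C j \<Longrightarrow> U \<subseteq> Z"
  using Cov_subset[of j U] by (cases "j = 0") (auto simp: CovE_def)

lemma C_nonempty: "U \<in> C j \<Longrightarrow> U \<noteq> {}"
  using Cov_nonempty[of j U] Z_nonempty by (cases "j = 0") (auto simp: CovE_def)

lemma C_disjoint: "U \<in> C j \<Longrightarrow> W \<in> C j \<Longrightarrow> U \<inter> W \<noteq> {} \<Longrightarrow> U = W"
  using Cov_disjoint[of j] by (cases "j = 0") (auto simp: CovE_def pairwise_def disjnt_def)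

lemma Cov_nbhd_disjoint_or_subset:
  "1 \<le> i \<Longrightarrow> i \<le> j \<Longrightarrow> U \<in> Cov j a \<Longrightarrow> W \<in> Cov i a \<Longrightarrow> i < j \<or> U \<noteq> W \<Longrightarrow>
    nbhd Z (\<gamma> * r ^ j) U \<inter> W = {} \<or> nbhd Z (\<gamma> * r ^ j) U \<subseteq> W"
  using conjunct2[OF conjunct2[OF conjunct2[OF conjunct2[OF char_seq[unfolded char_seq_def]]]]] colour
  by blast

lemma C_nbhd_subset:
  assumes "i \<le> j" "i < j \<or> U \<noteq> W" "U \<in> C j" "W \<in> C i"
    and "x \<in> nbhd Z (\<gamma> * r ^ j) U" "x \<in> W"
  shows "nbhd Z (\<gamma> * r ^ j) U \<subseteq> W"
proof (cases "i = 0")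
  case True
  then show ?thesis using assms(4) by (auto simp: CovE_def nbhd_def)
next
  case False
  then show ?thesis
    using Cov_nbhd_disjoint_or_subset[of i j U W] assms by (auto simp: CovE_def)
qed

lemma C_nested:
  assumes "i \<le> j" "U \<in> C j" "W \<in> C i" "U \<inter> W \<noteq> {}"
  shows "U \<subseteq> W"
proof (cases "i = j")
  case True
  then show ?thesis using C_disjoint assms by blast
next
  case False
  have "U \<subseteq> nbhd Z (\<gamma> * r ^ j) U"
    using C_subset[OF assms(2)] \<gamma>_pos r_pos by (intro subset_nbhd) auto
  moreover from this have "nbhd Z (\<gamma> * r ^ j) U \<subseteq> W"
    using C_nbhd_subset[of i j U W] assms False by auto
  ultimately show ?thesis by blast
qed

definition deepest_cover :: "nat \<Rightarrow> 'z set \<Rightarrow> nat \<Rightarrow> 'z set \<Rightarrow> bool" where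
  "deepest_cover m U w W \<longleftrightarrow> w \<le> m \<and> W \<in> C w \<and> U \<subseteq> W \<and>
     (\<forall>l W'. w < l \<longrightarrow> l \<le> m \<longrightarrow> W' \<in> C l \<longrightarrow> \<not> U \<subseteq> W')"

lemma exists_parent:
  assumes "U \<in> C j" "0 < j"
  obtains p P where "deepest_cover (j - 1) U p P" "E (j, U) (p, P)"
proof -
  define S where "S = {l. l < j \<and> (\<exists>W\<in>C l. U \<subseteq> W)}"
  have "finite S" unfolding S_def by auto
  moreover have "0 \<in> S" using assms C_subset[OF assms(1)] by (auto simp: S_def CovE_def)
  ultimately have "Max S \<in> S" and Max_ge: "\<And>l. l \<in> S \<Longrightarrow> l \<le> Max S"
    by (metis Max_in empty_iff, simp)
  then obtain P where P: "Max S < j" "P \<in> C (Max S)" "U \<subseteq> P" unfolding S_def by auto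
  have maximal: "\<not> U \<subseteq> W" if "Max S < l" "l < j" "W \<in> C l" for l W
  proof
    assume "U \<subseteq> W"
    then have "l \<in> S" using that by (auto simp: S_def)
    then show False using Max_ge that(1) by fastforce
  qed
  have "deepest_cover (j - 1) U (Max S) P" using P maximal by (auto simp: deepest_cover_def)
  moreover have "down_edge Z Cov a (j, U) (Max S, P)"
    using assms(1) P maximal by (auto simp: down_edge_def tree_V_def)
  ultimately show ?thesis using that by (auto simp: tree_edge_def)
qed

lemma tree_edge_sym: "E v w \<Longrightarrow> E w v"
  by (auto simp: tree_edge_def)

lemma exists_deepest_cover:
  "U \<in> C j \<Longrightarrow> m \<le> j \<Longrightarrow> \<exists>w W n. deepest_cover m U w W \<and> n \<le> j - m \<and> (E ^^ n) (j, U) (w, W)"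
proof (induction j arbitrary: U rule: less_induct)
  case (less j)
  show ?case
  proof (cases "j = m")
    case True
    then have "deepest_cover m U j U" using less.prems(1) by (simp add: deepest_cover_def)
    then show ?thesis by (intro exI[of _ j] exI[of _ U] exI[of _ 0]) simp
  next
    case False
    then have "0 < j" "m < j" using less.prems by auto
    obtain p P where parent: "deepest_cover (j - 1) U p P" and edge: "E (j, U) (p, P)"
      using exists_parent[OF less.prems(1) \<open>0 < j\<close>] by blast
    then have P: "p < j" "P \<in> C p" "U \<subseteq> P" using \<open>0 < j\<close> by (auto simp: deepest_cover_def)
    show ?thesis
    proof (cases "p \<le> m")
      case True
      then have "deepest_cover m U p P"
        using parent \<open>m < j\<close> by (auto simp: deepest_cover_def)
      moreover have "(E ^^ 1) (j, U) (p, P)" using edge by (simp only: relpowp_1)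
      ultimately show ?thesis using \<open>m < j\<close> by (intro exI[of _ p] exI[of _ P] exI[of _ 1]) simp
    next
      case False
      then obtain w W n where W: "deepest_cover m P w W" "n \<le> p - m" "(E ^^ n) (p, P) (w, W)"
        using less.IH[OF P(1,2)] False by auto
      have "\<not> U \<subseteq> W'" if l: "w < l" "l \<le> m" "W' \<in> C l" for l W'
      proof
        assume "U \<subseteq> W'"
        then have "P \<inter> W' \<noteq> {}" using C_nonempty[OF less.prems(1)] P(3) by blast
        then have "P \<subseteq> W'" using C_nested[OF _ P(2) l(3)] l(2) False by simp
        then show False using W(1) l by (simp add: deepest_cover_def)
      qed
      then have "deepest_cover m U w W" using W(1) P(3) by (auto simp: deepest_cover_def)
      moreover have "(E ^^ Suc n) (j, U) (w, W)" using edge W(3) by (rule relpowp_Suc_I2)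
      moreover have "Suc n \<le> j - m" using W(2) P(1) False by simp
      ultimately show ?thesis by blast
    qed
  qed
qed

text \<open>
  The point u' lies in the \<gamma> r^l-neighbourhood of W, so property (3) gives W \<subseteq> W'. If l' < l,
  the parent of W contains that neighbourhood, hence u' and U', and the maximality of W' makes
  the parent equal to W'.
\<close>
lemma deepest_covers_adjacent:
  assumes cover: "deepest_cover k U l W" and cover': "deepest_cover k U' l' W'" and "l' \<le> l"
    and "u \<in> U" "u' \<in> U'" "U' \<in> C j'" "k \<le> j'" and close: "1 \<le> k \<longrightarrow> dist u u' < \<gamma> * r ^ k"
  shows "(l, W) = (l', W') \<or> E (l, W) (l', W')"
proof -
  have W: "W \<in> C l" "U \<subseteq> W" "l \<le> k" and W': "W' \<in> C l'" "U' \<subseteq> W'"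
    using cover cover' by (auto simp: deepest_cover_def)
  have near: "u' \<in> nbhd Z (\<gamma> * r ^ l) W" if "1 \<le> l"
  proof -
    have "dist u u' < \<gamma> * r ^ k" using close W(3) that by auto
    also have "\<dots> \<le> \<gamma> * r ^ l"
      using W(3) r_pos r_less_1 \<gamma>_pos by (intro mult_left_mono power_decreasing) auto
    finally have "infdist u' W < \<gamma> * r ^ l"
      using infdist_le[of u W u'] \<open>u \<in> U\<close> W(2) by (auto simp: dist_commute)
    then show ?thesis using C_subset[OF \<open>U' \<in> C j'\<close>] \<open>u' \<in> U'\<close> by (auto simp: nbhd_def)
  qed
  have "W \<subseteq> W'"
  proof (cases "l = 0 \<or> W = W'")
    case True
    then show ?thesis using \<open>l' \<le> l\<close> W(1) W'(1) by (auto simp: CovE_def)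
  next
    case False
    then have "nbhd Z (\<gamma> * r ^ l) W \<subseteq> W'"
      using C_nbhd_subset[OF \<open>l' \<le> l\<close> _ W(1) W'(1) near] \<open>u' \<in> U'\<close> W'(2) by auto
    moreover have "W \<subseteq> nbhd Z (\<gamma> * r ^ l) W"
      using subset_nbhd[OF C_subset[OF W(1)]] r_pos \<gamma>_pos by simp
    ultimately show ?thesis by blast
  qed
  show ?thesis
  proof (cases "l' = l")
    case True
    then show ?thesis using C_disjoint[OF W(1)] W'(1) \<open>W \<subseteq> W'\<close> C_nonempty[OF W(1)] by auto
  next
    case False
    then have "l' < l" "0 < l" using \<open>l' \<le> l\<close> by auto
    obtain p P where parent: "deepest_cover (l - 1) W p P" and edge: "E (l, W) (p, P)"
      using exists_parent[OF W(1) \<open>0 < l\<close>] by blast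
    then have P: "p < l" "P \<in> C p" "W \<subseteq> P" using \<open>0 < l\<close> by (auto simp: deepest_cover_def)
    have "l' \<le> p"
    proof (rule ccontr)
      assume "\<not> l' \<le> p"
      moreover have "l' \<le> l - 1" using \<open>l' < l\<close> by simp
      ultimately have "\<not> W \<subseteq> W'"
        using parent W'(1) unfolding deepest_cover_def not_le by blast
      then show False using \<open>W \<subseteq> W'\<close> by contradiction
    qed
    obtain x where "x \<in> W" using C_nonempty[OF W(1)] by blast
    moreover have "W \<subseteq> nbhd Z (\<gamma> * r ^ l) W"
      using subset_nbhd[OF C_subset[OF W(1)]] r_pos \<gamma>_pos by simp
    ultimately have "nbhd Z (\<gamma> * r ^ l) W \<subseteq> P"
      using C_nbhd_subset[OF less_imp_le[OF P(1)] _ W(1) P(2)] P(1,3) by blast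
    then have "u' \<in> P" using near \<open>0 < l\<close> by auto
    then have "U' \<subseteq> P"
      using C_nested[OF _ \<open>U' \<in> C j'\<close> P(2)] \<open>u' \<in> U'\<close> P(1) W(3) \<open>k \<le> j'\<close> by auto
    moreover have "\<not> l' < p"
      using cover' P(1,2) W(3) \<open>U' \<subseteq> P\<close> unfolding deepest_cover_def by auto
    ultimately have "p = l'" and "P = W'"
      using \<open>l' \<le> p\<close> C_disjoint[OF P(2)] W' \<open>u' \<in> U'\<close> by auto
    then show ?thesis using edge \<open>p = l'\<close> by auto
  qed
qed

lemma graph_dist_members_le:
  assumes U: "U \<in> C j" "u \<in> U" and U': "U' \<in> C j'" "u' \<in> U'" and "k \<le> j" "k \<le> j'"
    and close: "1 \<le> k \<longrightarrow> dist u u' < \<gamma> * r ^ k"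
  shows "graph_dist E (j, U) (j', U') \<le> real j + real j' - 2 * real k + 1"
proof -
  obtain w W n where W: "deepest_cover k U w W" "n \<le> j - k" "(E ^^ n) (j, U) (w, W)"
    using exists_deepest_cover[OF U(1) \<open>k \<le> j\<close>] by blast
  obtain w' W' n' where W': "deepest_cover k U' w' W'" "n' \<le> j' - k" "(E ^^ n') (j', U') (w', W')"
    using exists_deepest_cover[OF U'(1) \<open>k \<le> j'\<close>] by blast
  have "(w, W) = (w', W') \<or> E (w, W) (w', W')"
  proof (cases "w' \<le> w")
    case True
    then show ?thesis using deepest_covers_adjacent[OF W(1) W'(1)] U U' \<open>k \<le> j'\<close> close by blast
  next
    case False
    then have "(w', W') = (w, W) \<or> E (w', W') (w, W)"
      using deepest_covers_adjacent[OF W'(1) W(1)] U \<open>k \<le> j\<close> U'(2) close by (auto simp: dist_commute)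
    then show ?thesis using tree_edge_sym by auto
  qed
  then obtain m where "m \<le> 1" "(E ^^ m) (w, W) (w', W')"
    by (metis le_refl relpowp_0_I relpowp_1 zero_le_one)
  then have "(E ^^ (n + m + n')) (j, U) (j', U')"
    using W(3) relpowp_symmetric[OF tree_edge_sym W'(3)] by (blast intro: relpowp_trans)
  then have "graph_dist E (j, U) (j', U') \<le> real (n + m + n')" by (rule graph_dist_le_relpowp)
  also have "\<dots> \<le> real j + real j' - 2 * real k + 1"
    using W(2) W'(2) \<open>m \<le> 1\<close> \<open>k \<le> j\<close> \<open>k \<le> j'\<close> by linarith
  finally show ?thesis .
qed

end

locale char_seq_closest_choice = char_seq_colour +
  fixes F
  assumes closest: "\<forall>j\<ge>1. \<forall>z\<in>Z. F a j z \<in> Cov j a \<and> (\<forall>U\<in>Cov j a. infdist z (F a j z) \<le> infdist z U)"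
    and lam_pos: "0 < lam"
begin

lemma f_map_near:
  assumes "z \<in> Z"
  obtains U u where "f_map Z F a j z = (j, U)" "U \<in> C j" "u \<in> U" "dist z u < 2 * lam * r ^ j"
proof (cases "j = 0")
  case True
  then show ?thesis using that assms lam_pos by (simp add: f_map_def CovE_def)
next
  case False
  then have F: "F a j z \<in> Cov j a" "\<And>U. U \<in> Cov j a \<Longrightarrow> infdist z (F a j z) \<le> infdist z U"
    using closest assms by auto
  obtain U where "U \<in> Cov j a" "infdist z U \<le> lam * r ^ j" using Cov_near[of j z] False assms by auto
  then have "infdist z (F a j z) \<le> lam * r ^ j" using F(2) by (meson order_trans)
  moreover have "lam * r ^ j < 2 * lam * r ^ j" using lam_pos r_pos by simp
  ultimately have "infdist z (F a j z) < 2 * lam * r ^ j" by linarith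
  moreover have "F a j z \<noteq> {}" using Cov_nonempty[OF _ F(1)] False by simp
  ultimately obtain u where "u \<in> F a j z" "dist z u < 2 * lam * r ^ j"
    by (rule infdist_less_imp_dist_less)
  then show ?thesis using that F(1) False by (simp add: f_map_def CovE_def)
qed

lemma graph_dist_f_map_le:
  assumes "z \<in> Z" "z' \<in> Z" "k \<le> min j j'"
    and close: "1 \<le> k \<longrightarrow> (4 * lam + 1) * max (dist z z') (r ^ min j j') < \<gamma> * r ^ k"
  shows "graph_dist E (f_map Z F a j z) (f_map Z F a j' z') \<le> real j + real j' - 2 * real k + 1"
proof -
  obtain U u where U: "f_map Z F a j z = (j, U)" "U \<in> C j" "u \<in> U" "dist z u < 2 * lam * r ^ j"
    using f_map_near[OF assms(1)] .
  obtain U' u' where U': "f_map Z F a j' z' = (j', U')" "U' \<in> C j'" "u' \<in> U'"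
      "dist z' u' < 2 * lam * r ^ j'"
    using f_map_near[OF assms(2)] .
  let ?e = "max (dist z z') (r ^ min j j')"
  have "r ^ j \<le> r ^ min j j'" "r ^ j' \<le> r ^ min j j'"
    using r_pos r_less_1 by (simp_all add: power_decreasing)
  then have "r ^ j \<le> ?e" "r ^ j' \<le> ?e" by (simp_all add: le_max_iff_disj)
  then have "2 * lam * r ^ j \<le> 2 * lam * ?e" "2 * lam * r ^ j' \<le> 2 * lam * ?e"
    using lam_pos by simp_all
  moreover have "dist u u' \<le> dist z u + dist z z' + dist z' u'"
    using dist_triangle[of u u' z] dist_triangle[of z u' z'] dist_commute[of u z] by linarith
  moreover have "(4 * lam + 1) * ?e = 2 * lam * ?e + 2 * lam * ?e + ?e" by algebra
  ultimately have "dist u u' < (4 * lam + 1) * ?e"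
    using U(4) U'(4) max.cobounded1[of "dist z z'" "r ^ min j j'"] by linarith
  then have "1 \<le> k \<longrightarrow> dist u u' < \<gamma> * r ^ k" using close by auto
  moreover have "k \<le> j" "k \<le> j'" using assms(3) by simp_all
  ultimately show ?thesis using graph_dist_members_le[OF U(2,3) U'(2,3)] U(1) U'(1) by simp
qed

lemma graph_dist_f_map_le_cone_dist:
  defines "R \<equiv> ln (1 / r)" and "M \<equiv> 4 * lam + 1"
  assumes Z: "bounded Z" "0 < diameter Z" and r: "r \<le> 1 / 2" and \<gamma>: "\<gamma> \<le> M"
    and z: "z \<in> Z" "z' \<in> Z"
  shows "graph_dist E (f_map Z F a j z) (f_map Z F a j' z') * R
    \<le> cone_dist (pi / diameter Z) (z, real j * R) (z', real j' * R)
      + (ln 2 + ln 288 + 2 * \<bar>ln pi\<bar> + 2 * \<bar>ln (diameter Z)\<bar> + 2 * ln (M / \<gamma>) + 3 * R)"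
proof -
  let ?e = "max (dist z z') (r ^ min j j')"
  have "\<exists>k\<le>min j j'. (1 \<le> k \<longrightarrow> M * ?e < \<gamma> * r ^ k) \<and>
      (k = min j j' \<or> \<not> (1 \<le> Suc k \<longrightarrow> M * ?e < \<gamma> * r ^ Suc k))"
    by (rule exists_last_level) simp
  then obtain k where k: "k \<le> min j j'" "1 \<le> k \<longrightarrow> M * ?e < \<gamma> * r ^ k"
    and "k = min j j' \<or> \<not> (1 \<le> Suc k \<longrightarrow> M * ?e < \<gamma> * r ^ Suc k)"
    by blast
  then have last: "k = min j j' \<or> \<gamma> * r ^ Suc k \<le> M * ?e" by auto
  have "0 < R" using r_pos r_less_1 by (simp add: R_def)
  have "graph_dist E (f_map Z F a j z) (f_map Z F a j' z') \<le> real j + real j' - 2 * real k + 1"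
    using graph_dist_f_map_le[OF z k(1)] k(2) by (simp add: M_def)
  then have "graph_dist E (f_map Z F a j z) (f_map Z F a j' z') * R
      \<le> (real j + real j' - 2 * real k + 1) * R"
    using \<open>0 < R\<close> by (simp add: mult_right_mono)
  also have "\<dots> \<le> cone_dist (pi / diameter Z) (z, real j * R) (z', real j' * R)
      + (ln 2 + ln 288 + 2 * \<bar>ln pi\<bar> + 2 * \<bar>ln (diameter Z)\<bar> + 2 * ln (M / \<gamma>) + 3 * R)"
    unfolding R_def
    by (rule levels_le_cone_dist[OF r_pos r \<gamma>_pos \<gamma> Z(2) diameter_bounded_bound[OF Z(1) z] k(1) last])
  finally show ?thesis .
qed

lemma f_map_roughly_lipschitz:
  assumes "bounded Z" "0 < diameter Z" "r \<le> 1 / 2" "\<gamma> < 1"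
  shows "\<exists>Lam>0. \<exists>\<sigma>\<ge>0. \<forall>j j' z z'. z \<in> Z \<and> z' \<in> Z \<longrightarrow>
    graph_dist E (f_map Z F a j z) (f_map Z F a j' z')
      \<le> Lam * cone_dist (pi / diameter Z) (z, real j * ln (1 / r)) (z', real j' * ln (1 / r)) + \<sigma>"
proof -
  define R M where "R = ln (1 / r)" and "M = 4 * lam + 1"
  define \<sigma> where "\<sigma> = ln 2 + ln 288 + 2 * \<bar>ln pi\<bar> + 2 * \<bar>ln (diameter Z)\<bar> + 2 * ln (M / \<gamma>) + 3 * R"
  have R: "0 < R" using r_pos r_less_1 by (simp add: R_def)
  have "\<gamma> \<le> M" using assms(4) lam_pos by (simp add: M_def)
  then have "0 \<le> ln (M / \<gamma>)" using \<gamma>_pos by simp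
  then have "\<sigma> \<ge> 0" using R by (simp add: \<sigma>_def)
  show ?thesis
  proof (rule exI[of _ "1 / R"], intro conjI exI[of _ "\<sigma> / R"] allI impI)
    show "0 < 1 / R" "0 \<le> \<sigma> / R" using R \<open>\<sigma> \<ge> 0\<close> by simp_all
    fix j j' z z'
    assume "z \<in> Z \<and> z' \<in> Z"
    then have "graph_dist E (f_map Z F a j z) (f_map Z F a j' z') * R
        \<le> cone_dist (pi / diameter Z) (z, real j * R) (z', real j' * R) + \<sigma>"
      using graph_dist_f_map_le_cone_dist[OF assms(1-3)] \<open>\<gamma> \<le> M\<close>
      unfolding R_def M_def \<sigma>_def by blast
    then show "graph_dist E (f_map Z F a j z) (f_map Z F a j' z')
      \<le> 1 / R * cone_dist (pi / diameter Z) (z, real j * ln (1 / r)) (z', real j' * ln (1 / r)) + \<sigma> / R"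
      using R unfolding R_def[symmetric] by (simp add: field_simps)
  qed
qed

end

theorem proposition3p4:
  fixes \<delta> \<gamma> lam :: real
  assumes "0 < \<delta>" "\<delta> < 1" "0 < \<gamma>" "\<gamma> < 1" "1 \<le> lam"
  shows "\<exists>r0>0. \<forall>(Z :: 'z::metric_space set) (A :: 'c set) (n :: nat) r Cov F.
    bounded Z \<and> diameter Z > 0 \<and> finite A \<and> card A = n + 1 \<and>
    0 < r \<and> r < 1 \<and> r < r0 \<and> lam * r < \<delta> \<and> r < diameter Z \<and>
    char_seq Z A Cov r \<delta> lam \<gamma> \<and>
    (\<forall>a\<in>A. \<forall>j\<ge>1. \<forall>z\<in>Z. F a j z \<in> Cov j a \<and>
        (\<forall>U\<in>Cov j a. infdist z (F a j z) \<le> infdist z U))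
    \<longrightarrow> (\<forall>a\<in>A. \<exists>Lam>0. \<exists>\<sigma>\<ge>0. \<forall>j j' z z'. z \<in> Z \<and> z' \<in> Z \<longrightarrow>
          graph_dist (tree_edge Z Cov a) (f_map Z F a j z) (f_map Z F a j' z')
            \<le> Lam * cone_dist (pi / diameter Z) (z, real j * ln (1 / r)) (z', real j' * ln (1 / r)) + \<sigma>)"
proof (rule exI[of _ "1 / 2"], intro conjI allI impI ballI, goal_cases)
  case 1
  show ?case by simp
next
  case (2 Z A n r Cov F a)
  then interpret char_seq_closest_choice Z A Cov r \<delta> lam \<gamma> a F
    using assms by unfold_locales auto
  show ?case using 2 assms by (intro f_map_roughly_lipschitz) auto
qed

end
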